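(* Let $P\in\mathbb{R}^{p\times m}$, $Y_d\in\mathbb{R}^p$, plant $Y_k=PU_k+N_k$, $E_k=Y_d-Y_k$, $\bar U_k=-\Delta U_k$, $D_k=-\Delta N_k$ (so $E_{k+1}=E_k+P\bar U_k+D_k$), $\bar B=\begin{bmatrix}P\\0\end{bmatrix}$, $\bar L\in\mathbb{R}^{2p\times p}$, and the ESO $\hat{\bar X}_{k+1}=(\bar A-\bar L\bar C)\hat{\bar X}_k+\bar B\bar U_k+\bar LE_k$, $\hat{\bar X}_k=\begin{bmatrix}\hat E_k\\\hat D_k\end{bmatrix}$, so $\hat D_k=F\hat{\bar X}_k$. Let $K,H\in\mathbb{R}^{m\times p}$ and apply $\bar U_k=-KE_k-H\hat D_k$. Then $\begin{bmatrix}E_{k+1}\\\hat{\bar X}_{k+1}\end{bmatrix}=G\begin{bmatrix}E_{k}\\\hat{\bar X}_{k}\end{bmatrix}+\begin{bmatrix}I\\0\end{bmatrix}D_k$ with $G=\begin{bmatrix}I-PK&-PHF\\\bar L-\bar BK&\bar A-\bar L\bar C-\bar BHF\end{bmatrix}$, and with $T=\begin{bmatrix}I&0\\-\bar C^{\top}&I\end{bmatrix}$ one has $TGT^{-1}=\begin{bmatrix}I-PK&-PHF\\0&\bar A-\bar L\bar C\end{bmatrix}$. Hence the eigenvalues of $G$ are those of $I-PK$ together with those of $\bar A-\bar L\bar C$ (separation principle), and the gains $K$, $H$, $\bar L$ can be synthesized separately from each other.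
   Context: $\mathbb{Z}_+=\{0,1,2,\dots\}$; $\Delta f_k=f_{k+1}-f_k$. $U_k\in\mathbb{R}^m$ input, $Y_k\in\mathbb{R}^p$ output, $(N_k)\subset\mathbb{R}^p$ bounded uncertainty. $\bar A=\begin{bmatrix}I_p&I_p\\0&I_p\end{bmatrix}$, $\bar C=\begin{bmatrix}I_p&0\end{bmatrix}$, $F=\begin{bmatrix}0&I_p\end{bmatrix}$. *)

theory Defs
  imports "Jordan_Normal_Form.Matrix" "Jordan_Normal_Form.Char_Poly"
begin

definition Abar :: "nat \<Rightarrow> real mat" where
  "Abar p = four_block_mat (1\<^sub>m p) (1\<^sub>m p) (0\<^sub>m p p) (1\<^sub>m p)"

definition Cbar :: "nat \<Rightarrow> real mat" where
  "Cbar p = mat p (2*p) (\<lambda>(i,j). if j = i then 1 else 0)"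

definition Fm :: "nat \<Rightarrow> real mat" where
  "Fm p = mat p (2*p) (\<lambda>(i,j). if j = i + p then 1 else 0)"

definition Bbar :: "nat \<Rightarrow> nat \<Rightarrow> real mat \<Rightarrow> real mat" where
  "Bbar p m P = mat (2*p) m (\<lambda>(i,j). if i < p then P $$ (i,j) else 0)"

definition Gcl :: "nat \<Rightarrow> nat \<Rightarrow> real mat \<Rightarrow> real mat \<Rightarrow> real mat \<Rightarrow> real mat \<Rightarrow> real mat" where
  "Gcl p m P K H L = four_block_mat
     (1\<^sub>m p - P * K)          (- (P * H * Fm p))
     (L - Bbar p m P * K)     (Abar p - L * Cbar p - Bbar p m P * H * Fm p)"

definition Tm :: "nat \<Rightarrow> real mat" where
  "Tm p = four_block_mat (1\<^sub>m p) (0\<^sub>m p (2*p)) (- transpose_mat (Cbar p)) (1\<^sub>m (2*p))"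

definition Tinv :: "nat \<Rightarrow> real mat" where
  "Tinv p = four_block_mat (1\<^sub>m p) (0\<^sub>m p (2*p)) (transpose_mat (Cbar p)) (1\<^sub>m (2*p))"

definition cspec :: "real mat \<Rightarrow> complex set" where
  "cspec A = {z. eigenvalue (map_mat complex_of_real A) z}"

end

theory Submission
  imports Defs
begin

(* Put S = Cbar^T = [I; 0]. Then Cbar S = I, F S = 0, Abar S = S and Bbar = S P, so conjugating the
   closed-loop matrix G with the shear T = [[I, 0], [-S, I]], whose inverse is [[I, 0], [S, I]],
   annihilates the lower left block: in the coordinates (E, Xh - S E) the observer error evolves
   autonomously under Abar - L Cbar, whatever K and H are. Similar matrices share their
   characteristic polynomial, and that of a block upper triangular matrix is the product of those
   of its diagonal blocks, so the spectrum of G is the union of the spectra of I - P K and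
   Abar - L Cbar. *)

definition shear_mat :: "nat \<Rightarrow> nat \<Rightarrow> 'a :: ring_1 mat \<Rightarrow> 'a mat" where
  "shear_mat n k S = four_block_mat (1\<^sub>m n) (0\<^sub>m n k) S (1\<^sub>m k)"

lemma shear_mat_carrier: "shear_mat n k S \<in> carrier_mat (n + k) (n + k)"
  by (simp add: shear_mat_def)

lemma shear_mat_mult:
  assumes "S \<in> carrier_mat k n" and "S' \<in> carrier_mat k n"
  shows "shear_mat n k S * shear_mat n k S' = shear_mat n k (S + S')"
  using assms unfolding shear_mat_def
  by (subst mult_four_block_mat[of _ n n _ k _ k]) (auto intro!: arg_cong4[where f = four_block_mat])

lemma shear_mat_zero: "shear_mat n k (0\<^sub>m k n) = 1\<^sub>m (n + k)"
  by (simp add: shear_mat_def)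

lemma shear_mat_uminus_inverse:
  assumes "S \<in> carrier_mat k n"
  shows "shear_mat n k (- S) * shear_mat n k S = 1\<^sub>m (n + k)"
    and "shear_mat n k S * shear_mat n k (- S) = 1\<^sub>m (n + k)"
proof -
  have "S + - S = 0\<^sub>m k n" using assms by (intro eq_matI) auto
  then show "shear_mat n k (- S) * shear_mat n k S = 1\<^sub>m (n + k)"
    and "shear_mat n k S * shear_mat n k (- S) = 1\<^sub>m (n + k)"
    using assms by (simp_all add: shear_mat_mult shear_mat_zero[symmetric])
qed

lemma shear_mat_conj_four_block_mat:
  fixes A :: "'a :: ring_1 mat"
  assumes A: "A \<in> carrier_mat n n" and B: "B \<in> carrier_mat n k"
    and C: "C \<in> carrier_mat k n" and D: "D \<in> carrier_mat k k" and S: "S \<in> carrier_mat k n"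
  shows "shear_mat n k (- S) * four_block_mat A B C D * shear_mat n k S
    = four_block_mat (A + B * S) B (C + D * S - S * (A + B * S)) (D - S * B)"
proof -
  have "four_block_mat A B C D * shear_mat n k S = four_block_mat (A + B * S) B (C + D * S) D"
    using A B C D S unfolding shear_mat_def by (subst mult_four_block_mat[of _ n n _ k _ k]) auto
  moreover have "shear_mat n k (- S) * four_block_mat (A + B * S) B (C + D * S) D
    = four_block_mat (A + B * S) B (C + D * S - S * (A + B * S)) (D - S * B)"
    using A B C D S unfolding shear_mat_def
    by (subst mult_four_block_mat[of _ n n _ k _ k]) (auto intro!: arg_cong4[where f = four_block_mat])
  ultimately show ?thesis
    using A B C D S by (simp add: assoc_mult_mat[OF shear_mat_carrier _ shear_mat_carrier])
qed

lemma shear_mat_conj_observer_closed_loop: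
  fixes P :: "'a :: ring_1 mat"
  assumes P: "P \<in> carrier_mat n m" and K: "K \<in> carrier_mat m n" and H: "H \<in> carrier_mat m n"
    and L: "L \<in> carrier_mat q n" and A: "A \<in> carrier_mat q q" and C: "C \<in> carrier_mat n q"
    and F: "F \<in> carrier_mat n q" and S: "S \<in> carrier_mat q n"
    and FS: "F * S = 0\<^sub>m n n" and CS: "C * S = 1\<^sub>m n" and AS: "A * S = S"
  shows "shear_mat n q (- S) * four_block_mat (1\<^sub>m n - P * K) (- (P * H * F))
      (L - S * P * K) (A - L * C - S * P * H * F) * shear_mat n q S
    = four_block_mat (1\<^sub>m n - P * K) (- (P * H * F)) (0\<^sub>m q n) (A - L * C)"
proof -
  have PH: "P * H \<in> carrier_mat n n" using P H by simp
  have SP: "S * P \<in> carrier_mat q m" using S P by simp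
  have PHFS: "P * H * F * S = 0\<^sub>m n n"
    using assoc_mult_mat[OF PH F S] FS right_mult_zero_mat[OF PH] by simp
  have SPHFS: "S * P * H * F * S = 0\<^sub>m q n"
    using assoc_mult_mat[OF mult_carrier_mat[OF SP H] F S] FS
      right_mult_zero_mat[OF mult_carrier_mat[OF SP H]]
    by simp
  have SPHF: "S * (P * H * F) = S * P * H * F"
    using S P H F by (simp add: assoc_mult_mat[of _ q n _ m _ n] assoc_mult_mat[of _ q n _ n _ q]
        assoc_mult_mat[of _ n m _ n _ q])
  have LCS: "L * C * S = L" using assoc_mult_mat[OF L C S] CS L by simp
  have top_left: "1\<^sub>m n - P * K + - (P * H * F) * S = 1\<^sub>m n - P * K"
    using P K H F S PHFS by (subst uminus_mult_left_mat) auto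
  have bottom_left: "L - S * P * K + (A - L * C - S * P * H * F) * S - S * (1\<^sub>m n - P * K) = 0\<^sub>m q n"
  proof -
    have "(A - L * C) * S = A * S - L * C * S"
      using A L C S by (intro minus_mult_distrib_mat) auto
    moreover have "(A - L * C - S * P * H * F) * S = (A - L * C) * S - S * P * H * F * S"
      using A L C S P H F by (intro minus_mult_distrib_mat[of _ q q]) (auto intro: minus_carrier_mat)
    ultimately have "(A - L * C - S * P * H * F) * S = S - L - 0\<^sub>m q n"
      unfolding AS LCS SPHFS by simp
    moreover have "S * (1\<^sub>m n - P * K) = S - S * P * K"
      using S P K by (subst mult_minus_distrib_mat[of _ q n _ n]) auto
    ultimately show ?thesis using L S P K by (intro eq_matI) auto
  qed
  have bottom_right: "A - L * C - S * P * H * F - S * - (P * H * F) = A - L * C"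
    using A L C S P H F SPHF by (intro eq_matI) auto
  have blocks: "1\<^sub>m n - P * K \<in> carrier_mat n n" "- (P * H * F) \<in> carrier_mat n q"
    "L - S * P * K \<in> carrier_mat q n" "A - L * C - S * P * H * F \<in> carrier_mat q q"
    using P K H F S by (auto intro!: minus_carrier_mat)
  show ?thesis
    unfolding shear_mat_conj_four_block_mat[OF blocks S] top_left bottom_left bottom_right ..
qed

lemma tracking_error_increment:
  fixes P :: "'a :: ring_1 mat"
  assumes P: "P \<in> carrier_mat n m" and r: "r \<in> carrier_vec n"
    and u: "u \<in> carrier_vec m" and u': "u' \<in> carrier_vec m"
    and v: "v \<in> carrier_vec n" and v': "v' \<in> carrier_vec n"
  shows "r - (P *\<^sub>v u' + v') = (r - (P *\<^sub>v u + v)) + P *\<^sub>v (- (u' - u)) + (- (v' - v))"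
proof -
  have "P *\<^sub>v (- (u' - u)) = P *\<^sub>v u - P *\<^sub>v u'"
    using P u u' by (intro eq_vecI) (auto simp: scalar_prod_minus_distrib[of _ m])
  then show ?thesis
    using P r u u' v v' by (intro eq_vecI) auto
qed

lemma observer_closed_loop_step:
  fixes P :: "'a :: ring_1 mat"
  assumes P: "P \<in> carrier_mat n m" and K: "K \<in> carrier_mat m n" and H: "H \<in> carrier_mat m n"
    and L: "L \<in> carrier_mat q n" and A: "A \<in> carrier_mat q q" and C: "C \<in> carrier_mat n q"
    and F: "F \<in> carrier_mat n q" and B: "B \<in> carrier_mat q m"
    and e: "e \<in> carrier_vec n" and x: "x \<in> carrier_vec q" and d: "d \<in> carrier_vec n"
    and u: "u = - (K *\<^sub>v e) - H *\<^sub>v (F *\<^sub>v x)"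
    and e': "e' = e + P *\<^sub>v u + d"
    and x': "x' = (A - L * C) *\<^sub>v x + B *\<^sub>v u + L *\<^sub>v e"
  shows "e' @\<^sub>v x' = four_block_mat (1\<^sub>m n - P * K) (- (P * H * F)) (L - B * K) (A - L * C - B * H * F)
      *\<^sub>v (e @\<^sub>v x) + (d @\<^sub>v 0\<^sub>v q)"
proof -
  have PHF: "(P * H * F) *\<^sub>v x = P *\<^sub>v (H *\<^sub>v (F *\<^sub>v x))"
    using P H F x by (subst assoc_mult_mat_vec[of _ n n]) auto
  have BHF: "(B * H * F) *\<^sub>v x = B *\<^sub>v (H *\<^sub>v (F *\<^sub>v x))"
    using B H F x by (subst assoc_mult_mat_vec[of _ q n]) auto
  have "e' = (1\<^sub>m n - P * K) *\<^sub>v e + - (P * H * F) *\<^sub>v x + d"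
    using P K H F e x d unfolding e' u
    by (simp add: PHF minus_mult_distrib_mat_vec[of _ n n] mult_minus_distrib_mat_vec[of _ n m]
        del: assoc_mult_mat)
      (intro eq_vecI; simp)
  moreover have "x' = (L - B * K) *\<^sub>v e + (A - L * C - B * H * F) *\<^sub>v x + 0\<^sub>v q"
    using A L C B K H F e x unfolding x' u
    by (simp add: BHF mult_carrier_mat[OF mult_carrier_mat[OF B H] F] minus_carrier_mat
        minus_mult_distrib_mat_vec[of _ q q] minus_mult_distrib_mat_vec[of _ q n]
        mult_minus_distrib_mat_vec[of _ q m]
        del: assoc_mult_mat)
      (intro eq_vecI; simp)
  ultimately show ?thesis
    using P K H L A C F B e x d
    by (subst four_block_mat_mult_vec[of _ n n _ q])
      (auto simp: append_vec_add[of _ n _ _ q] intro: minus_carrier_mat)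
qed

lemma char_poly_four_block_mat_lower_left_zero:
  fixes A :: "'a :: idom mat"
  assumes A: "A \<in> carrier_mat n n" and B: "B \<in> carrier_mat n k" and D: "D \<in> carrier_mat k k"
  shows "char_poly (four_block_mat A B (0\<^sub>m k n) D) = char_poly A * char_poly D"
proof -
  let ?cm = "\<lambda>A. [:0, 1:] \<cdot>\<^sub>m 1\<^sub>m (dim_row A) + map_mat (\<lambda>a. [:- a:]) A"
  have "char_poly (four_block_mat A B (0\<^sub>m k n) D) = det (?cm (four_block_mat A B (0\<^sub>m k n) D))"
    unfolding char_poly_defs using A D by simp
  also have "?cm (four_block_mat A B (0\<^sub>m k n) D)
      = four_block_mat (?cm A) (map_mat (\<lambda>a. [:- a:]) B) (0\<^sub>m k n) (?cm D)"
    using A B D by (intro eq_matI) (auto simp: one_poly_def)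
  also have "det \<dots> = det (?cm A) * det (?cm D)"
    using A B D by (intro det_four_block_mat_lower_left_zero[OF _ _ refl]) auto
  also have "\<dots> = char_poly A * char_poly D"
    unfolding char_poly_defs ..
  finally show ?thesis .
qed

lemma cspec_char_poly:
  assumes "A \<in> carrier_mat n n"
  shows "cspec A = {z. poly (map_poly complex_of_real (char_poly A)) z = 0}"
  unfolding cspec_def eigenvalue_root_char_poly[OF map_carrier_mat[THEN iffD2, OF assms]]
    of_real_hom.char_poly_hom[OF assms] ..

lemma cspec_eq_Un_if_char_poly_mult:
  assumes G: "G \<in> carrier_mat (n + k) (n + k)" and A: "A \<in> carrier_mat n n" and D: "D \<in> carrier_mat k k"
    and char_poly_G: "char_poly G = char_poly A * char_poly D"
  shows "cspec G = cspec A \<union> cspec D"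
proof -
  interpret of_real_poly: map_poly_comm_ring_hom complex_of_real ..
  show ?thesis
    unfolding cspec_char_poly[OF G] cspec_char_poly[OF A] cspec_char_poly[OF D] char_poly_G
      of_real_poly.hom_mult poly_mult mult_eq_0_iff Collect_disj_eq ..
qed

lemma Abar_carrier: "Abar p \<in> carrier_mat (2 * p) (2 * p)"
  by (simp add: Abar_def mult_2)

lemma Cbar_carrier: "Cbar p \<in> carrier_mat p (2 * p)"
  by (simp add: Cbar_def)

lemma Fm_carrier: "Fm p \<in> carrier_mat p (2 * p)"
  by (simp add: Fm_def)

lemma Bbar_carrier: "Bbar p m P \<in> carrier_mat (2 * p) m"
  by (simp add: Bbar_def)

lemma mult_transpose_Cbar:
  assumes "M \<in> carrier_mat r (2 * p)"
  shows "M * transpose_mat (Cbar p) = mat r p (\<lambda>(i, j). M $$ (i, j))"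
  using assms by (intro eq_matI) (auto simp: Cbar_def scalar_prod_def of_bool_def[symmetric])

lemma Fm_mult_transpose_Cbar: "Fm p * transpose_mat (Cbar p) = 0\<^sub>m p p"
  by (subst mult_transpose_Cbar) (auto simp: Fm_def)

lemma Cbar_mult_transpose_Cbar: "Cbar p * transpose_mat (Cbar p) = 1\<^sub>m p"
  by (subst mult_transpose_Cbar) (auto simp: Cbar_def)

lemma Abar_mult_transpose_Cbar: "Abar p * transpose_mat (Cbar p) = transpose_mat (Cbar p)"
  by (subst mult_transpose_Cbar) (auto simp: Abar_def Cbar_def mult_2)

lemma transpose_Cbar_mult: "P \<in> carrier_mat p m \<Longrightarrow> transpose_mat (Cbar p) * P = Bbar p m P"
  by (intro eq_matI) (auto simp: Bbar_def Cbar_def scalar_prod_def of_bool_def[symmetric])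

lemma Tm_eq_shear_mat: "Tm p = shear_mat p (2 * p) (- transpose_mat (Cbar p))"
  unfolding Tm_def shear_mat_def ..

lemma Tinv_eq_shear_mat: "Tinv p = shear_mat p (2 * p) (transpose_mat (Cbar p))"
  unfolding Tinv_def shear_mat_def ..

lemma Tm_Gcl_Tinv:
  assumes P: "P \<in> carrier_mat p m" and K: "K \<in> carrier_mat m p" and H: "H \<in> carrier_mat m p"
    and L: "L \<in> carrier_mat (2 * p) p"
  shows "Tm p * Gcl p m P K H L * Tinv p
    = four_block_mat (1\<^sub>m p - P * K) (- (P * H * Fm p)) (0\<^sub>m (2 * p) p) (Abar p - L * Cbar p)"
  unfolding Tm_eq_shear_mat Tinv_eq_shear_mat Gcl_def transpose_Cbar_mult[OF P, symmetric]
  by (rule shear_mat_conj_observer_closed_loop[OF P K H L Abar_carrier Cbar_carrier Fm_carrier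
        transpose_carrier_mat[THEN iffD2, OF Cbar_carrier] Fm_mult_transpose_Cbar
        Cbar_mult_transpose_Cbar Abar_mult_transpose_Cbar])

lemma Tm_Tinv_inverse:
  shows "Tm p * Tinv p = 1\<^sub>m (p + 2 * p)" and "Tinv p * Tm p = 1\<^sub>m (p + 2 * p)"
  unfolding Tm_eq_shear_mat Tinv_eq_shear_mat
  using shear_mat_uminus_inverse[OF transpose_carrier_mat[THEN iffD2, OF Cbar_carrier]] by simp_all

lemma Gcl_carrier:
  assumes P: "P \<in> carrier_mat p m" and K: "K \<in> carrier_mat m p" and H: "H \<in> carrier_mat m p"
    and L: "L \<in> carrier_mat (2 * p) p"
  shows "Gcl p m P K H L \<in> carrier_mat (p + 2 * p) (p + 2 * p)"
  unfolding Gcl_def using P K H L Abar_carrier Cbar_carrier Fm_carrier Bbar_carrier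
    mult_carrier_mat[OF mult_carrier_mat[OF Bbar_carrier H] Fm_carrier]
  by (intro four_block_carrier_mat) (auto intro!: minus_carrier_mat)

lemma char_poly_Gcl:
  assumes P: "P \<in> carrier_mat p m" and K: "K \<in> carrier_mat m p" and H: "H \<in> carrier_mat m p"
    and L: "L \<in> carrier_mat (2 * p) p"
  shows "char_poly (Gcl p m P K H L) = char_poly (1\<^sub>m p - P * K) * char_poly (Abar p - L * Cbar p)"
proof -
  let ?M = "four_block_mat (1\<^sub>m p - P * K) (- (P * H * Fm p)) (0\<^sub>m (2 * p) p) (Abar p - L * Cbar p)"
  have A: "1\<^sub>m p - P * K \<in> carrier_mat p p"
    using P K by (auto intro!: minus_carrier_mat)
  have B: "- (P * H * Fm p) \<in> carrier_mat p (2 * p)"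
    using mult_carrier_mat[OF mult_carrier_mat[OF P H] Fm_carrier] by simp
  have D: "Abar p - L * Cbar p \<in> carrier_mat (2 * p) (2 * p)"
    using L Cbar_carrier by (auto intro!: minus_carrier_mat)
  have T: "Tm p \<in> carrier_mat (p + 2 * p) (p + 2 * p)" "Tinv p \<in> carrier_mat (p + 2 * p) (p + 2 * p)"
    unfolding Tm_eq_shear_mat Tinv_eq_shear_mat by (rule shear_mat_carrier)+
  have "similar_mat ?M (Gcl p m P K H L)"
    using four_block_carrier_mat[OF A D] Gcl_carrier[OF P K H L] T Tm_Tinv_inverse
      Tm_Gcl_Tinv[OF P K H L, symmetric]
    by (intro similar_matI[where P = "Tm p" and Q = "Tinv p" and n = "p + 2 * p"]) auto
  then have "char_poly (Gcl p m P K H L) = char_poly ?M"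
    by (rule char_poly_similar[OF similar_mat_sym])
  also have "\<dots> = char_poly (1\<^sub>m p - P * K) * char_poly (Abar p - L * Cbar p)"
    by (rule char_poly_four_block_mat_lower_left_zero[OF A B D])
  finally show ?thesis .
qed

theorem lemma5:
  fixes p m :: nat
    and P K H L :: "real mat"
    and Yd :: "real vec"
    and U N :: "nat \<Rightarrow> real vec"
    and Xh :: "nat \<Rightarrow> real vec"
    and Y E Ub D :: "nat \<Rightarrow> real vec"
  assumes P: "P \<in> carrier_mat p m"
    and K: "K \<in> carrier_mat m p"
    and H: "H \<in> carrier_mat m p"
    and L: "L \<in> carrier_mat (2*p) p"
    and Yd: "Yd \<in> carrier_vec p"
    and U: "\<And>k. U k \<in> carrier_vec m"
    and N: "\<And>k. N k \<in> carrier_vec p"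
    and Y_def: "\<And>k. Y k = P *\<^sub>v U k + N k"
    and E_def: "\<And>k. E k = Yd - Y k"
    and Ub_def: "\<And>k. Ub k = - (U (Suc k) - U k)"
    and D_def: "\<And>k. D k = - (N (Suc k) - N k)"
    and Xh0: "Xh 0 \<in> carrier_vec (2*p)"
    and ESO: "\<And>k. Xh (Suc k) = (Abar p - L * Cbar p) *\<^sub>v Xh k + Bbar p m P *\<^sub>v Ub k + L *\<^sub>v E k"
    and ctrl: "\<And>k. Ub k = - (K *\<^sub>v E k) - H *\<^sub>v (Fm p *\<^sub>v Xh k)"
  shows "(\<forall>k. E (Suc k) = E k + P *\<^sub>v Ub k + D k)
    \<and> (\<forall>k. E (Suc k) @\<^sub>v Xh (Suc k) = Gcl p m P K H L *\<^sub>v (E k @\<^sub>v Xh k) + (D k @\<^sub>v 0\<^sub>v (2*p)))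
    \<and> Tm p * Tinv p = 1\<^sub>m (3*p) \<and> Tinv p * Tm p = 1\<^sub>m (3*p)
    \<and> Tm p * Gcl p m P K H L * Tinv p
        = four_block_mat (1\<^sub>m p - P * K) (- (P * H * Fm p)) (0\<^sub>m (2*p) p) (Abar p - L * Cbar p)
    \<and> char_poly (Gcl p m P K H L) = char_poly (1\<^sub>m p - P * K) * char_poly (Abar p - L * Cbar p)
    \<and> cspec (Gcl p m P K H L) = cspec (1\<^sub>m p - P * K) \<union> cspec (Abar p - L * Cbar p)"
proof -
  have E_carrier: "E k \<in> carrier_vec p" for k
    using P Yd U N by (simp add: E_def Y_def)
  have Xh_carrier: "Xh k \<in> carrier_vec (2 * p)" for k
  proof (cases k)
    case (Suc j)
    show ?thesis using L unfolding Suc ESO carrier_vec_def by simp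
  qed (simp add: Xh0)
  have D_carrier: "D k \<in> carrier_vec p" for k
    using N by (simp add: D_def)
  have error_step: "E (Suc k) = E k + P *\<^sub>v Ub k + D k" for k
    unfolding E_def Y_def Ub_def D_def by (rule tracking_error_increment[OF P Yd U U N N])
  have closed_loop: "E (Suc k) @\<^sub>v Xh (Suc k)
      = Gcl p m P K H L *\<^sub>v (E k @\<^sub>v Xh k) + (D k @\<^sub>v 0\<^sub>v (2 * p))" for k
    unfolding Gcl_def
    by (rule observer_closed_loop_step[OF P K H L Abar_carrier Cbar_carrier Fm_carrier Bbar_carrier
          E_carrier Xh_carrier D_carrier ctrl error_step ESO])
  have cspec_Gcl: "cspec (Gcl p m P K H L) = cspec (1\<^sub>m p - P * K) \<union> cspec (Abar p - L * Cbar p)"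
    using P K L Cbar_carrier
    by (intro cspec_eq_Un_if_char_poly_mult[OF Gcl_carrier[OF P K H L] _ _ char_poly_Gcl[OF P K H L]])
      (auto intro!: minus_carrier_mat)
  have three_p: "3 * p = p + 2 * p" by simp
  show ?thesis
    unfolding three_p
    using error_step closed_loop Tm_Tinv_inverse Tm_Gcl_Tinv[OF P K H L] char_poly_Gcl[OF P K H L] cspec_Gcl
    by blast
qed

end
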